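(* Let $N,T,K,G\ge1$, $\sigma^2>0$, and nonrandom $\mathbf X_{it}\in\mathbb R^K$ with $\sum_{t=1}^T\mathbf X_{it}\mathbf X_{it}'=\Sigma$ for all $i$, $\Sigma$ nonsingular. Let $\mathbb X$ be the $NT\times NK$ block-diagonal matrix with $i$-th block $X_i=(\mathbf X_{i1},\dots,\mathbf X_{iT})'$, $\mathbf Y\in\mathbb R^{NT}$ stacked outcomes, $\mathbf s=\mathbb X'\mathbf Y$, and suppose $\mathbf s\sim N(\mathbb X'\mathbb X\mathbf B,\sigma^2\mathbb X'\mathbb X)$. Fix $\boldsymbol\gamma\in\{1,\dots,G\}^N$ with all groups nonempty, $R$ ($r\times GK$, rank $r$) and $\mathbf r\in\mathbb R^r$. Then $R\widehat{\boldsymbol\alpha}(\boldsymbol\gamma)$ and $\mathbf W_{PCR}(\boldsymbol\gamma)$ are independent.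
   Context: $D(\boldsymbol\gamma)$ is the $N\times G$ group-dummy matrix, $\mathbb D(\boldsymbol\gamma)=D(\boldsymbol\gamma)\otimes I_K$, $\mathbb X(\boldsymbol\gamma)=\mathbb X\mathbb D(\boldsymbol\gamma)$. $\widehat{\boldsymbol\alpha}(\boldsymbol\gamma)=[\mathbb X(\boldsymbol\gamma)'\mathbb X(\boldsymbol\gamma)]^{-1}\mathbb D(\boldsymbol\gamma)'\mathbf s$; $\widehat{\boldsymbol\alpha}_R(\boldsymbol\gamma)=\widehat{\boldsymbol\alpha}(\boldsymbol\gamma)-[\mathbb X(\boldsymbol\gamma)'\mathbb X(\boldsymbol\gamma)]^{-1}R'\{R[\mathbb X(\boldsymbol\gamma)'\mathbb X(\boldsymbol\gamma)]^{-1}R'\}^{-1}[R\widehat{\boldsymbol\alpha}(\boldsymbol\gamma)-\mathbf r]$; $\widehat{\mathbf U}(\boldsymbol\gamma)=\mathbf Y-\mathbb X(\boldsymbol\gamma)\widehat{\boldsymbol\alpha}(\boldsymbol\gamma)$; $\mathbf W_{PCR}(\boldsymbol\gamma)=\mathbb X'\mathbb X(\boldsymbol\gamma)\widehat{\boldsymbol\alpha}_R(\boldsymbol\gamma)+\mathbb X'\widehat{\mathbf U}(\boldsymbol\gamma)$. *)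

theory Defs
  imports "HOL-Probability.Probability"
begin

text \<open>Individuals, time periods, regressors, groups and restrictions are
indexed by finite types 'n, 't, 'k, 'g, 'r (so N = CARD('n) >= 1 etc.).
A vector in R^{NK} is real^('n \<times> 'k) (block (i,k)); an m x p matrix is real^'p^'m.\<close>

definition outer_vec :: "real^'k::finite \<Rightarrow> real^'k::finite^'k::finite" where
  "outer_vec v = (\<chi> a b. v $ a * v $ b)"

definition bigX :: "('n::finite \<Rightarrow> 't::finite \<Rightarrow> real^'k::finite) \<Rightarrow> real^('n::finite \<times> 'k::finite)^('n::finite \<times> 't::finite)" where
  "bigX Xd = (\<chi> p q. if fst p = fst q then Xd (fst p) (snd p) $ snd q else 0)"

text \<open>Group dummy matrix D(gamma) (N x G) and DD(gamma) = D(gamma) \<otimes> I_K.\<close>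
definition dummyD :: "('n::finite \<Rightarrow> 'g::finite) \<Rightarrow> real^'g::finite^'n::finite" where
  "dummyD \<gamma> = (\<chi> i g. if \<gamma> i = g then 1 else 0)"

definition dummyDD :: "('n::finite \<Rightarrow> 'g::finite) \<Rightarrow> real^('g::finite \<times> 'k::finite)^('n::finite \<times> 'k::finite)" where
  "dummyDD \<gamma> = (\<chi> p q. dummyD \<gamma> $ fst p $ fst q * (if snd p = snd q then 1 else 0))"

definition Xgam :: "('n::finite \<Rightarrow> 't::finite \<Rightarrow> real^'k::finite) \<Rightarrow> ('n::finite \<Rightarrow> 'g::finite) \<Rightarrow> real^('g::finite \<times> 'k::finite)^('n::finite \<times> 't::finite)" where
  "Xgam Xd \<gamma> = bigX Xd ** dummyDD \<gamma>"

definition alpha_hat :: "('n::finite \<Rightarrow> 't::finite \<Rightarrow> real^'k::finite) \<Rightarrow> ('n::finite \<Rightarrow> 'g::finite) \<Rightarrow> real^('n::finite \<times> 'k::finite) \<Rightarrow> real^('g::finite \<times> 'k::finite)" where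
  "alpha_hat Xd \<gamma> s =
     matrix_inv (transpose (Xgam Xd \<gamma>) ** Xgam Xd \<gamma>) *v (transpose (dummyDD \<gamma>) *v s)"

definition alpha_hat_R ::
  "('n::finite \<Rightarrow> 't::finite \<Rightarrow> real^'k::finite) \<Rightarrow> ('n::finite \<Rightarrow> 'g::finite) \<Rightarrow> real^('g::finite \<times> 'k::finite)^'r::finite \<Rightarrow> real^'r::finite
     \<Rightarrow> real^('n::finite \<times> 'k::finite) \<Rightarrow> real^('g::finite \<times> 'k::finite)" where
  "alpha_hat_R Xd \<gamma> R rv s =
     (let Q = matrix_inv (transpose (Xgam Xd \<gamma>) ** Xgam Xd \<gamma>) in
      alpha_hat Xd \<gamma> s
        - (Q ** transpose R ** matrix_inv (R ** Q ** transpose R)) *v (R *v alpha_hat Xd \<gamma> s - rv))"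

definition U_hat :: "('n::finite \<Rightarrow> 't::finite \<Rightarrow> real^'k::finite) \<Rightarrow> ('n::finite \<Rightarrow> 'g::finite) \<Rightarrow> real^('n::finite \<times> 't::finite) \<Rightarrow> real^('n::finite \<times> 't::finite)" where
  "U_hat Xd \<gamma> Y = Y - Xgam Xd \<gamma> *v alpha_hat Xd \<gamma> (transpose (bigX Xd) *v Y)"

definition W_PCR ::
  "('n::finite \<Rightarrow> 't::finite \<Rightarrow> real^'k::finite) \<Rightarrow> ('n::finite \<Rightarrow> 'g::finite) \<Rightarrow> real^('g::finite \<times> 'k::finite)^'r::finite \<Rightarrow> real^'r::finite
     \<Rightarrow> real^('n::finite \<times> 't::finite) \<Rightarrow> real^('n::finite \<times> 'k::finite)" where
  "W_PCR Xd \<gamma> R rv Y =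
     (transpose (bigX Xd) ** Xgam Xd \<gamma>) *v alpha_hat_R Xd \<gamma> R rv (transpose (bigX Xd) *v Y)
     + transpose (bigX Xd) *v U_hat Xd \<gamma> Y"

definition gaussian_vec :: "'a measure \<Rightarrow> ('a \<Rightarrow> real^'m::finite) \<Rightarrow> real^'m::finite \<Rightarrow> real^'m::finite^'m::finite \<Rightarrow> bool" where
  "gaussian_vec M Z mu C \<longleftrightarrow>
     Z \<in> borel_measurable M \<and> transpose C = C \<and> (\<forall>a. 0 \<le> a \<bullet> (C *v a)) \<and>
     (\<forall>a. if a \<bullet> (C *v a) = 0 then (AE \<omega> in M. a \<bullet> Z \<omega> = a \<bullet> mu)
          else distributed M lborel (\<lambda>\<omega>. a \<bullet> Z \<omega>) (normal_density (a \<bullet> mu) (sqrt (a \<bullet> (C *v a)))))"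

text \<open>Independence of two random vectors (possibly of different types):
P(X \<in> A, Z \<in> B) = P(X \<in> A) P(Z \<in> B) for all Borel sets A, B.
(The library's indep_var requires both variables to have the same type.)\<close>
definition indep_rv :: "'a measure \<Rightarrow> ('a \<Rightarrow> 'b::topological_space) \<Rightarrow> ('a \<Rightarrow> 'c::topological_space) \<Rightarrow> bool" where
  "indep_rv M X Z \<longleftrightarrow> X \<in> borel_measurable M \<and> Z \<in> borel_measurable M \<and>
     (\<forall>A\<in>sets borel. \<forall>B\<in>sets borel.
        measure M (X -` A \<inter> Z -` B \<inter> space M) = measure M (X -` A \<inter> space M) * measure M (Z -` B \<inter> space M))"

end

theory Submission
  imports Defs
begin

text \<open>Both statistics are affine in the Gaussian vector \<open>s = X'Y\<close>. With
  \<open>Q = [X(\<gamma>)'X(\<gamma>)]\<^sup>-\<^sup>1\<close>, \<open>P = R Q D(\<gamma>)'\<close> and the restricted-least-squares correction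
  \<open>L = X'X(\<gamma>) Q R' (R Q R')\<^sup>-\<^sup>1\<close> one has \<open>R \<alpha>(\<gamma>) = P s\<close> and \<open>W\<^sub>P\<^sub>C\<^sub>R(\<gamma>) = (I - L P) s + L r\<close>.
  Since \<open>P (X'X) P' = R Q R'\<close>, the cross covariance \<open>\<sigma>\<^sup>2 (I - L P) X'X P'\<close> vanishes, and
  uncorrelated linear images of a Gaussian vector are independent because their joint
  characteristic function factorizes.

  That last step needs the uniqueness theorem for characteristic functions of finite Borel
  measures on \<open>\<real>\<^sup>n\<close>. Bounded continuous functions are approximated, uniformly on a ball carrying
  almost all mass and with a global bound, by trigonometric polynomials: cut the function off
  inside a box, push it to a torus, where it is continuous, and apply Stone--Weierstrass there.\<close>

lemma matrix_mul_matrix_inv: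
  fixes A :: "'a::semiring_1^'n^'n"
  assumes "invertible A"
  shows "A ** matrix_inv A = mat 1" and "matrix_inv A ** A = mat 1"
proof -
  have "\<exists>A'. A ** A' = mat 1 \<and> A' ** A = mat 1" using assms unfolding invertible_def .
  then have "A ** matrix_inv A = mat 1 \<and> matrix_inv A ** A = mat 1"
    unfolding matrix_inv_def by (rule someI_ex)
  then show "A ** matrix_inv A = mat 1" "matrix_inv A ** A = mat 1" by auto
qed

lemma transpose_matrix_inv_symmetric:
  fixes A :: "'a::comm_semiring_1^'n^'n"
  assumes sym: "transpose A = A" and inv: "invertible A"
  shows "transpose (matrix_inv A) = matrix_inv A"
proof -
  have left: "transpose (matrix_inv A) ** A = mat 1"
    using arg_cong[OF matrix_mul_matrix_inv(1)[OF inv], of transpose] sym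
    by (simp add: matrix_transpose_mul)
  have "transpose (matrix_inv A) = transpose (matrix_inv A) ** (A ** matrix_inv A)"
    by (simp add: matrix_mul_matrix_inv(1)[OF inv])
  also have "\<dots> = matrix_inv A"
    by (simp add: matrix_mul_assoc left)
  finally show ?thesis .
qed

lemma inner_matrix_vector_mult: "(u::real^'m) \<bullet> ((M::real^'n^'m) *v v) = (transpose M *v u) \<bullet> v"
  by (simp add: dot_lmul_matrix)

lemma quadratic_form_add_orthogonal:
  fixes C :: "real^'n^'n"
  assumes "transpose C = C" "y \<bullet> (C *v x) = 0"
  shows "(x + y) \<bullet> (C *v (x + y)) = x \<bullet> (C *v x) + y \<bullet> (C *v y)"
proof -
  have "x \<bullet> (C *v y) = y \<bullet> (C *v x)"
    by (metis assms(1) inner_matrix_vector_mult inner_commute)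
  then show ?thesis
    using assms(2) by (simp add: matrix_vector_right_distrib inner_add_left inner_add_right)
qed

definition pos_def :: "real^'n^'n \<Rightarrow> bool" where
  "pos_def A \<longleftrightarrow> (\<forall>x. x \<noteq> 0 \<longrightarrow> 0 < x \<bullet> (A *v x))"

lemma pos_def_invertible:
  assumes "pos_def A"
  shows "invertible A"
proof -
  have "A *v x = 0 \<Longrightarrow> x = 0" for x
    using assms unfolding pos_def_def by force
  then show ?thesis
    using matrix_left_invertible_ker invertible_left_inverse by blast
qed

lemma pos_def_gram:
  fixes N :: "real^'n^'m"
  assumes "inj ((*v) N)"
  shows "pos_def (transpose N ** N)"
  unfolding pos_def_def
proof (intro allI impI)
  fix x :: "real^'n" assume "x \<noteq> 0"
  then have "N *v x \<noteq> 0" using injD[OF assms, of x 0] by auto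
  moreover have "x \<bullet> ((transpose N ** N) *v x) = (N *v x) \<bullet> (N *v x)"
    by (simp only: matrix_vector_mul_assoc[symmetric] inner_matrix_vector_mult transpose_transpose)
  ultimately show "0 < x \<bullet> ((transpose N ** N) *v x)" by simp
qed

lemma pos_def_matrix_inv:
  fixes A :: "real^'n^'n"
  assumes "pos_def A"
  shows "pos_def (matrix_inv A)"
  unfolding pos_def_def
proof (intro allI impI)
  fix y :: "real^'n" assume "y \<noteq> 0"
  define u where "u = matrix_inv A *v y"
  have y: "y = A *v u"
    unfolding u_def matrix_vector_mul_assoc
    by (simp add: matrix_mul_matrix_inv(1)[OF pos_def_invertible[OF assms]])
  then have "u \<noteq> 0" using \<open>y \<noteq> 0\<close> by auto
  then have "0 < u \<bullet> (A *v u)" using assms unfolding pos_def_def by blast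
  also have "u \<bullet> (A *v u) = y \<bullet> (matrix_inv A *v y)"
    unfolding u_def[symmetric] using y by (simp add: inner_commute)
  finally show "0 < y \<bullet> (matrix_inv A *v y)" .
qed

lemma pos_def_congruence:
  fixes A :: "real^'n^'n" and R :: "real^'n^'m"
  assumes "pos_def A" "inj ((*v) (transpose R))"
  shows "pos_def (R ** A ** transpose R)"
  unfolding pos_def_def
proof (intro allI impI)
  fix z :: "real^'m" assume "z \<noteq> 0"
  then have "transpose R *v z \<noteq> 0" using injD[OF assms(2), of z 0] by auto
  then have "0 < (transpose R *v z) \<bullet> (A *v (transpose R *v z))"
    using assms(1) unfolding pos_def_def by blast
  also have "\<dots> = z \<bullet> ((R ** A ** transpose R) *v z)"
    by (simp only: matrix_vector_mul_assoc[symmetric] inner_matrix_vector_mult)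
  finally show "0 < z \<bullet> ((R ** A ** transpose R) *v z)" .
qed

section \<open>Characteristic functions determine finite Borel measures\<close>

inductive_set trig_polys :: "('e::euclidean_space \<Rightarrow> complex) set" where
  trig_polys_cis: "(\<lambda>x. a * cis (t \<bullet> x)) \<in> trig_polys"
| trig_polys_add: "f \<in> trig_polys \<Longrightarrow> g \<in> trig_polys \<Longrightarrow> (\<lambda>x. f x + g x) \<in> trig_polys"

lemma trig_polys_const: "(\<lambda>x. a) \<in> trig_polys"
  using trig_polys_cis[of a 0] by simp

lemma trig_polys_mult:
  assumes "f \<in> trig_polys" "g \<in> trig_polys"
  shows "(\<lambda>x. f x * g x) \<in> trig_polys"
  using assms
proof (induction f rule: trig_polys.induct)
  case (trig_polys_cis a t)
  from trig_polys_cis.prems show ?case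
  proof (induction g rule: trig_polys.induct)
    case (trig_polys_cis b s)
    have "(\<lambda>x. (a * b) * cis ((t + s) \<bullet> x)) \<in> trig_polys"
      by (rule trig_polys.trig_polys_cis)
    moreover have "(\<lambda>x. (a * b) * cis ((t + s) \<bullet> x)) = (\<lambda>x. a * cis (t \<bullet> x) * (b * cis (s \<bullet> x)))"
      by (auto simp: inner_add_left cis_mult[symmetric] algebra_simps)
    ultimately show ?case by simp
  next
    case (trig_polys_add g1 g2)
    then show ?case by (simp add: distrib_left trig_polys.trig_polys_add)
  qed
next
  case (trig_polys_add f1 f2)
  then show ?case by (simp add: distrib_right trig_polys.trig_polys_add)
qed

lemma trig_polys_cmult: "f \<in> trig_polys \<Longrightarrow> (\<lambda>x. c * f x) \<in> trig_polys"
  using trig_polys_mult[OF trig_polys_const] by blast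

lemma trig_polys_sum:
  "finite I \<Longrightarrow> (\<And>i. i \<in> I \<Longrightarrow> f i \<in> trig_polys) \<Longrightarrow> (\<lambda>x. \<Sum>i\<in>I. f i x) \<in> trig_polys"
  by (induction I rule: finite_induct) (simp_all add: trig_polys_const trig_polys_add)

lemma trig_polys_cos: "(\<lambda>x. complex_of_real (cos (t \<bullet> x))) \<in> trig_polys"
proof -
  have "(\<lambda>x. (1/2) * cis (t \<bullet> x) + (1/2) * cis ((-t) \<bullet> x)) \<in> trig_polys"
    by (intro trig_polys_add trig_polys_cis)
  moreover have "(\<lambda>x. (1/2) * cis (t \<bullet> x) + (1/2) * cis ((-t) \<bullet> x)) = (\<lambda>x. complex_of_real (cos (t \<bullet> x)))"
    by (auto simp: complex_eq_iff)
  ultimately show ?thesis by simp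
qed

lemma trig_polys_sin: "(\<lambda>x. complex_of_real (sin (t \<bullet> x))) \<in> trig_polys"
proof -
  have "(\<lambda>x. (-\<i>/2) * cis (t \<bullet> x) + (\<i>/2) * cis ((-t) \<bullet> x)) \<in> trig_polys"
    by (intro trig_polys_add trig_polys_cis)
  moreover have "(\<lambda>x. (-\<i>/2) * cis (t \<bullet> x) + (\<i>/2) * cis ((-t) \<bullet> x)) = (\<lambda>x. complex_of_real (sin (t \<bullet> x)))"
    by (auto simp: complex_eq_iff)
  ultimately show ?thesis by simp
qed

lemma integrable_trig_polys:
  fixes M :: "'e::euclidean_space measure"
  assumes M: "finite_measure M" "sets M = sets borel" and f: "f \<in> trig_polys"
  shows "integrable M f"
  using f
proof (induction f rule: trig_polys.induct)
  case (trig_polys_cis a t)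
  have "(\<lambda>x. a * cis (t \<bullet> x)) \<in> borel_measurable M"
    unfolding measurable_cong_sets[OF M(2) refl]
    by (intro borel_measurable_continuous_onI continuous_intros)
  then show ?case
    by (intro finite_measure.integrable_const_bound[OF M(1), where B="norm a"]) (auto simp: norm_mult)
qed simp

definition char_vec :: "'e::euclidean_space measure \<Rightarrow> 'e \<Rightarrow> complex" where
  "char_vec M t = (\<integral>x. cis (t \<bullet> x) \<partial>M)"

lemma integral_trig_polys_eq:
  fixes \<mu> \<nu> :: "'e::euclidean_space measure"
  assumes fin: "finite_measure \<mu>" "finite_measure \<nu>"
    and sets: "sets \<mu> = sets borel" "sets \<nu> = sets borel"
    and char: "char_vec \<mu> = char_vec \<nu>"
    and f: "f \<in> trig_polys"
  shows "integral\<^sup>L \<mu> f = integral\<^sup>L \<nu> f"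
  using f
proof (induction f rule: trig_polys.induct)
  case (trig_polys_cis a t)
  then show ?case using fun_cong[OF char, of t] by (simp add: char_vec_def)
next
  case (trig_polys_add f g)
  then show ?case
    using integrable_trig_polys[OF fin(1) sets(1)] integrable_trig_polys[OF fin(2) sets(2)] by simp
qed

lemma integral_real_trig_poly_eq:
  fixes \<mu> \<nu> :: "'e::euclidean_space measure"
  assumes "finite_measure \<mu>" "finite_measure \<nu>" "sets \<mu> = sets borel" "sets \<nu> = sets borel"
    and "char_vec \<mu> = char_vec \<nu>" "(\<lambda>x. complex_of_real (p x)) \<in> trig_polys"
  shows "(\<integral>x. p x \<partial>\<mu>) = (\<integral>x. p x \<partial>\<nu>)"
  using integral_trig_polys_eq[OF assms] by simp

text \<open>Polynomials in \<open>torus c\<close> are trigonometric polynomials of period \<open>2\<pi>c\<close> in every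
  coordinate, so their bound on one box is a bound on all of space.\<close>
definition torus :: "real \<Rightarrow> 'e::euclidean_space \<Rightarrow> 'e \<times> 'e" where
  "torus c x = ((\<Sum>b\<in>Basis. cos ((x \<bullet> b) / c) *\<^sub>R b), (\<Sum>b\<in>Basis. sin ((x \<bullet> b) / c) *\<^sub>R b))"

lemma inner_fst_torus: "b \<in> Basis \<Longrightarrow> fst (torus c x) \<bullet> b = cos ((x \<bullet> b) / c)"
  unfolding torus_def fst_conv by (rule inner_sum_left_Basis)

lemma inner_snd_torus: "b \<in> Basis \<Longrightarrow> snd (torus c x) \<bullet> b = sin ((x \<bullet> b) / c)"
  unfolding torus_def snd_conv by (rule inner_sum_left_Basis)

lemma torus_eq_iff:
  "torus c x = torus c y \<longleftrightarrow>
    (\<forall>b\<in>Basis. cos ((x \<bullet> b) / c) = cos ((y \<bullet> b) / c) \<and> sin ((x \<bullet> b) / c) = sin ((y \<bullet> b) / c))"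
proof
  assume "torus c x = torus c y"
  then show "\<forall>b\<in>Basis. cos ((x \<bullet> b) / c) = cos ((y \<bullet> b) / c) \<and> sin ((x \<bullet> b) / c) = sin ((y \<bullet> b) / c)"
    by (metis inner_fst_torus inner_snd_torus)
next
  assume "\<forall>b\<in>Basis. cos ((x \<bullet> b) / c) = cos ((y \<bullet> b) / c) \<and> sin ((x \<bullet> b) / c) = sin ((y \<bullet> b) / c)"
  then show "torus c x = torus c y"
    unfolding torus_def by (auto intro!: sum.cong)
qed

lemma continuous_on_torus: "c \<noteq> 0 \<Longrightarrow> continuous_on UNIV (torus c)"
  unfolding torus_def by (intro continuous_intros) auto

lemma cos_sin_eq_imp_eq:
  fixes x y :: real
  assumes "\<bar>x\<bar> < pi" "\<bar>y\<bar> \<le> pi" "cos x = cos y" "sin x = sin y"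
  shows "x = y"
proof -
  obtain n :: int where n: "y = x + 2 * pi * n"
    using sin_cos_eq_iff assms(3,4) by metis
  have "\<bar>real_of_int n\<bar> * (2 * pi) = \<bar>y - x\<bar>" by (simp add: n abs_mult)
  also have "\<dots> < 1 * (2 * pi)" using assms(1,2) by linarith
  finally have "\<bar>real_of_int n\<bar> < 1" by (rule mult_right_less_imp_less) simp
  then show ?thesis using n by simp
qed

lemma torus_inj_box_interior:
  fixes x y :: "'e::euclidean_space"
  assumes c: "0 < c" and x: "\<forall>b\<in>Basis. \<bar>x \<bullet> b\<bar> < pi * c" and y: "\<forall>b\<in>Basis. \<bar>y \<bullet> b\<bar> \<le> pi * c"
    and eq: "torus c x = torus c y"
  shows "x = y"
proof (rule euclidean_eqI)
  fix b :: 'e assume b: "b \<in> Basis"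
  have "\<bar>(x \<bullet> b) / c\<bar> < pi" using x b c by (simp add: divide_less_eq)
  moreover have "\<bar>(y \<bullet> b) / c\<bar> \<le> pi" using y b c by (simp add: divide_le_eq)
  ultimately have "(x \<bullet> b) / c = (y \<bullet> b) / c"
    using cos_sin_eq_imp_eq eq b unfolding torus_eq_iff by blast
  then show "x \<bullet> b = y \<bullet> b" using c by simp
qed

lemma torus_box_representative:
  fixes x :: "'e::euclidean_space"
  assumes c: "0 < c"
  obtains x' where "\<forall>b\<in>Basis. \<bar>x' \<bullet> b\<bar> \<le> pi * c" "torus c x' = torus c x"
proof -
  define y where "y b = (x \<bullet> b) / c - of_int (round ((x \<bullet> b) / c / (2 * pi))) * (2 * pi)" for b
  define x' where "x' = (\<Sum>b\<in>Basis. (c * y b) *\<^sub>R b)"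
  have x'b: "x' \<bullet> b = c * y b" if "b \<in> Basis" for b
    unfolding x'_def using that by (rule inner_sum_left_Basis)
  have "\<bar>y b\<bar> \<le> pi" for b
  proof -
    have "\<bar>of_int (round ((x \<bullet> b) / c / (2 * pi))) - (x \<bullet> b) / c / (2 * pi)\<bar> \<le> 1/2"
      by (rule of_int_round_abs_le)
    then have "\<bar>(of_int (round ((x \<bullet> b) / c / (2 * pi))) - (x \<bullet> b) / c / (2 * pi)) * (2 * pi)\<bar> \<le> pi"
      by (simp add: abs_mult)
    moreover have "(of_int (round ((x \<bullet> b) / c / (2 * pi))) - (x \<bullet> b) / c / (2 * pi)) * (2 * pi) = - y b"
      unfolding y_def by (simp add: field_simps)
    ultimately show ?thesis by simp
  qed
  then have "\<forall>b\<in>Basis. \<bar>x' \<bullet> b\<bar> \<le> pi * c"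
    using c by (simp add: x'b abs_mult mult.commute)
  moreover have "cos (y b) = cos ((x \<bullet> b) / c)" "sin (y b) = sin ((x \<bullet> b) / c)" for b
    unfolding y_def
    using cos.plus_of_int[of "(x \<bullet> b) / c" "- round ((x \<bullet> b) / c / (2 * pi))"]
      sin.plus_of_int[of "(x \<bullet> b) / c" "- round ((x \<bullet> b) / c / (2 * pi))"]
    by (simp_all add: algebra_simps)
  then have "torus c x' = torus c x"
    unfolding torus_eq_iff using c by (simp add: x'b)
  ultimately show ?thesis by (rule that)
qed

lemma bounded_linear_pair_eq_sum_Basis:
  fixes f :: "'e::euclidean_space \<times> 'e \<Rightarrow> real"
  assumes "bounded_linear f"
  shows "f (u, v) = (\<Sum>b\<in>Basis. (u \<bullet> b) * f (b, 0) + (v \<bullet> b) * f (0, b))"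
proof -
  have lin: "linear f" using assms bounded_linear.linear by blast
  have "(u, v) = (\<Sum>b\<in>Basis. (u \<bullet> b) *\<^sub>R (b, 0) + (v \<bullet> b) *\<^sub>R (0, b))"
    by (simp add: euclidean_representation prod_eq_iff fst_sum snd_sum sum.distrib)
  then have "f (u, v) = f (\<Sum>b\<in>Basis. (u \<bullet> b) *\<^sub>R (b, 0) + (v \<bullet> b) *\<^sub>R (0, b))"
    by simp
  also have "\<dots> = (\<Sum>b\<in>Basis. (u \<bullet> b) * f (b, 0) + (v \<bullet> b) * f (0, b))"
    by (simp only: linear_sum[OF lin] linear_add[OF lin] linear_scale[OF lin]) simp
  finally show ?thesis .
qed

lemma real_polynomial_function_torus:
  fixes P :: "'e::euclidean_space \<times> 'e \<Rightarrow> real"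
  assumes "real_polynomial_function P"
  shows "(\<lambda>x. complex_of_real (P (torus c x))) \<in> trig_polys"
  using assms
proof (induction P rule: real_polynomial_function.induct)
  case (linear f)
  have inner_scaled: "((1/c) *\<^sub>R b) \<bullet> x = (x \<bullet> b) / c" for b x :: 'e
    by (simp add: inner_commute divide_inverse mult.commute)
  have "f (torus c x) = (\<Sum>b\<in>Basis. cos ((x \<bullet> b) / c) * f (b, 0) + sin ((x \<bullet> b) / c) * f (0, b))" for x
    using bounded_linear_pair_eq_sum_Basis[OF linear, of "fst (torus c x)" "snd (torus c x)"]
    by (simp add: inner_fst_torus inner_snd_torus cong: sum.cong)
  then have "(\<lambda>x. complex_of_real (f (torus c x))) =
     (\<lambda>x. \<Sum>b\<in>Basis. f (b, 0) * complex_of_real (cos (((1/c) *\<^sub>R b) \<bullet> x))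
                   + f (0, b) * complex_of_real (sin (((1/c) *\<^sub>R b) \<bullet> x)))"
    unfolding inner_scaled by (simp add: mult.commute)
  then show ?case
    by (simp only:) (intro trig_polys_sum trig_polys_add trig_polys_cmult trig_polys_cos trig_polys_sin finite_Basis)
qed (simp_all add: trig_polys_const trig_polys_add trig_polys_mult)

lemma compact_abs_inner_Basis_le: "compact {x::'e::euclidean_space. \<forall>b\<in>Basis. \<bar>x \<bullet> b\<bar> \<le> a}"
proof -
  have "{x::'e. \<forall>b\<in>Basis. \<bar>x \<bullet> b\<bar> \<le> a} = cbox (- a *\<^sub>R One) (a *\<^sub>R One)"
    by (force simp: mem_box abs_le_iff)
  then show ?thesis by simp
qed

lemma eq_if_torus_eq_on_box:
  fixes f :: "'e::euclidean_space \<Rightarrow> real"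
  assumes supp: "\<And>x. rr \<le> norm x \<Longrightarrow> f x = 0" and c: "0 < c" "rr < pi * c"
    and box: "\<forall>b\<in>Basis. \<bar>x \<bullet> b\<bar> \<le> pi * c" "\<forall>b\<in>Basis. \<bar>y \<bullet> b\<bar> \<le> pi * c"
    and eq: "torus c x = torus c y"
  shows "f x = f y"
proof -
  have vanish: "f z = 0" if z: "\<not> (\<forall>b\<in>Basis. \<bar>z \<bullet> b\<bar> < pi * c)" for z
  proof -
    obtain b where "b \<in> Basis" "\<not> \<bar>z \<bullet> b\<bar> < pi * c" using z by blast
    then have "rr \<le> norm z" using Basis_le_norm[of b z] c(2) by linarith
    then show ?thesis by (rule supp)
  qed
  consider "\<forall>b\<in>Basis. \<bar>x \<bullet> b\<bar> < pi * c" | "\<forall>b\<in>Basis. \<bar>y \<bullet> b\<bar> < pi * c"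
    | "\<not> (\<forall>b\<in>Basis. \<bar>x \<bullet> b\<bar> < pi * c)" "\<not> (\<forall>b\<in>Basis. \<bar>y \<bullet> b\<bar> < pi * c)"
    by blast
  then show ?thesis
  proof cases
    case 1
    then show ?thesis using torus_inj_box_interior[OF c(1) 1 box(2) eq] by simp
  next
    case 2
    then show ?thesis using torus_inj_box_interior[OF c(1) 2 box(1) eq[symmetric]] by simp
  next
    case 3
    then show ?thesis using vanish by simp
  qed
qed

lemma torus_factorization:
  fixes f :: "'e::euclidean_space \<Rightarrow> real"
  assumes cont: "continuous_on UNIV f" and supp: "\<And>x. rr \<le> norm x \<Longrightarrow> f x = 0"
    and c: "0 < c" "rr < pi * c"
    and K: "K = {x. \<forall>b\<in>Basis. \<bar>x \<bullet> b\<bar> \<le> pi * c}"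
  obtains g where "continuous_on (torus c ` K) g" "\<And>x. x \<in> K \<Longrightarrow> g (torus c x) = f x"
proof -
  have cK: "compact K" unfolding K by (rule compact_abs_inner_Basis_le)
  have ctor: "continuous_on K (torus c)"
    using c(1) by (intro continuous_on_subset[OF continuous_on_torus]) auto
  have wd: "f x = f y" if "x \<in> K" "y \<in> K" "torus c x = torus c y" for x y
    using that unfolding K by (intro eq_if_torus_eq_on_box[where f=f, OF supp c]) auto
  define g where "g y = f (SOME x. x \<in> K \<and> torus c x = y)" for y
  have g: "g (torus c x) = f x" if "x \<in> K" for x
  proof -
    have "\<exists>x'. x' \<in> K \<and> torus c x' = torus c x" using that by blast
    then have "(SOME x'. x' \<in> K \<and> torus c x' = torus c x) \<in> K \<and>
        torus c (SOME x'. x' \<in> K \<and> torus c x' = torus c x) = torus c x"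
      by (rule someI_ex)
    then show ?thesis unfolding g_def using wd that by blast
  qed
  have cS: "compact (torus c ` K)" using compact_continuous_image[OF ctor cK] .
  have "continuous_on (torus c ` K) g"
    unfolding continuous_on_closed_vimage[OF compact_imp_closed[OF cS]]
  proof (intro allI impI)
    fix T :: "real set" assume T: "closed T"
    have "closed (f -` T)"
      by (rule continuous_closed_vimage[OF T]) (use cont in \<open>simp add: continuous_on_eq_continuous_at\<close>)
    then have "compact (K \<inter> f -` T)" by (rule compact_Int_closed[OF cK])
    then have "compact (torus c ` (K \<inter> f -` T))"
      using compact_continuous_image[OF continuous_on_subset[OF ctor Int_lower1]] by blast
    moreover have "g -` T \<inter> torus c ` K = torus c ` (K \<inter> f -` T)"
      using g by force
    ultimately show "closed (g -` T \<inter> torus c ` K)" by (simp add: compact_imp_closed)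
  qed
  then show ?thesis using g that by blast
qed

lemma torus_polynomial_approx:
  fixes f :: "'e::euclidean_space \<Rightarrow> real"
  assumes cont: "continuous_on UNIV f" and bnd: "\<And>x. \<bar>f x\<bar> \<le> B"
    and supp: "\<And>x. rr \<le> norm x \<Longrightarrow> f x = 0"
    and c: "0 < c" "rr < pi * c" and e: "0 < e"
  obtains P where "real_polynomial_function P"
    "\<And>x. (\<forall>b\<in>Basis. \<bar>x \<bullet> b\<bar> \<le> pi * c) \<Longrightarrow> \<bar>f x - P (torus c x)\<bar> < e"
    "\<And>x. \<bar>P (torus c x)\<bar> \<le> B + e"
proof -
  define K where "K = {x::'e. \<forall>b\<in>Basis. \<bar>x \<bullet> b\<bar> \<le> pi * c}"
  have "continuous_on K (torus c)"
    using c(1) by (intro continuous_on_subset[OF continuous_on_torus]) auto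
  moreover have "compact K" unfolding K_def by (rule compact_abs_inner_Basis_le)
  ultimately have "compact (torus c ` K)" by (rule compact_continuous_image)
  moreover obtain g where g: "continuous_on (torus c ` K) g" "\<And>x. x \<in> K \<Longrightarrow> g (torus c x) = f x"
    using torus_factorization[OF cont supp c K_def] by blast
  ultimately obtain P where P: "real_polynomial_function P" "\<And>y. y \<in> torus c ` K \<Longrightarrow> \<bar>g y - P y\<bar> < e"
    using Stone_Weierstrass_real_polynomial_function e by blast
  show ?thesis
  proof (rule that[OF P(1)])
    fix x :: 'e assume "\<forall>b\<in>Basis. \<bar>x \<bullet> b\<bar> \<le> pi * c"
    then have "x \<in> K" unfolding K_def by blast
    then show "\<bar>f x - P (torus c x)\<bar> < e" using P(2) g(2) by fastforce
  next
    fix x :: 'e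
    obtain x' where "x' \<in> K" and x': "torus c x' = torus c x"
      using torus_box_representative[OF c(1)] unfolding K_def by blast
    then have "\<bar>f x' - P (torus c x')\<bar> < e" using P(2) g(2) by fastforce
    then have "\<bar>P (torus c x')\<bar> \<le> B + e" using bnd[of x'] by linarith
    then show "\<bar>P (torus c x)\<bar> \<le> B + e" unfolding x' .
  qed
qed

lemma trig_poly_approx_on_ball:
  fixes f :: "'e::euclidean_space \<Rightarrow> real"
  assumes cont: "continuous_on UNIV f" and bnd: "\<And>x. \<bar>f x\<bar> \<le> B" and r: "0 \<le> r" and e: "0 < e"
  obtains p where "(\<lambda>x. complex_of_real (p x)) \<in> trig_polys" "continuous_on UNIV p"
    "\<And>x. norm x \<le> r \<Longrightarrow> \<bar>f x - p x\<bar> < e" "\<And>x. \<bar>p x\<bar> \<le> B + e"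
proof -
  have B: "0 \<le> B" using bnd[of 0] by linarith
  define f' where "f' x = f x * max 0 (min 1 (r + 1 - norm x))" for x
  have cont': "continuous_on UNIV f'" unfolding f'_def by (intro continuous_intros cont)
  have bnd': "\<bar>f' x\<bar> \<le> B" for x
  proof -
    have "\<bar>f' x\<bar> = \<bar>f x\<bar> * max 0 (min 1 (r + 1 - norm x))" unfolding f'_def by (simp add: abs_mult)
    also have "\<dots> \<le> B * 1" using B by (intro mult_mono bnd) auto
    finally show ?thesis by simp
  qed
  have supp': "f' x = 0" if "r + 1 \<le> norm x" for x using that unfolding f'_def by simp
  define c where "c = (r + 2) / pi"
  have c: "0 < c" "r + 1 < pi * c" unfolding c_def using r by simp_all
  obtain P where P: "real_polynomial_function P"
      "\<And>x. (\<forall>b\<in>Basis. \<bar>x \<bullet> b\<bar> \<le> pi * c) \<Longrightarrow> \<bar>f' x - P (torus c x)\<bar> < e"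
      "\<And>x. \<bar>P (torus c x)\<bar> \<le> B + e"
    using torus_polynomial_approx[OF cont' bnd' supp' c e] by blast
  show ?thesis
  proof (rule that)
    show "(\<lambda>x. complex_of_real (P (torus c x))) \<in> trig_polys"
      by (rule real_polynomial_function_torus[OF P(1)])
    show "continuous_on UNIV (\<lambda>x. P (torus c x))"
      using P(1) c(1)
      by (intro continuous_on_compose2[OF continuous_on_polymonial_function continuous_on_torus])
        (auto simp: real_polynomial_function_eq)
  next
    fix x :: 'e
    show "\<bar>P (torus c x)\<bar> \<le> B + e" by (rule P(3))
  next
    fix x :: 'e assume x: "norm x \<le> r"
    have "\<bar>x \<bullet> b\<bar> \<le> pi * c" if "b \<in> Basis" for b
      using Basis_le_norm[OF that, of x] x c(2) by linarith
    moreover have "f' x = f x" using x unfolding f'_def by simp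
    ultimately show "\<bar>f x - P (torus c x)\<bar> < e" using P(2) by metis
  qed
qed

lemma integral_diff_le_off_set:
  fixes f p :: "'e \<Rightarrow> real"
  assumes M: "finite_measure M" and meas: "f \<in> borel_measurable M" "p \<in> borel_measurable M"
    and bnd: "\<And>x. \<bar>f x\<bar> \<le> B" "\<And>x. \<bar>p x\<bar> \<le> B'"
    and A: "A \<in> sets M" and close: "\<And>x. x \<notin> A \<Longrightarrow> \<bar>f x - p x\<bar> \<le> e" and e: "0 \<le> e"
  shows "\<bar>(\<integral>x. f x \<partial>M) - (\<integral>x. p x \<partial>M)\<bar> \<le> e * measure M (space M) + (B + B') * measure M A"
proof -
  interpret finite_measure M by fact
  have int: "integrable M f" "integrable M p"
    using meas bnd by (auto intro: integrable_const_bound[where B=B] integrable_const_bound[where B=B'])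
  have intA: "integrable M (indicator A :: 'e \<Rightarrow> real)"
    using A by (intro integrable_real_indicator) (simp_all add: less_top[symmetric])
  have "\<bar>f x - p x\<bar> \<le> e + (B + B') * indicator A x" for x
  proof (cases "x \<in> A")
    case True
    have "\<bar>f x - p x\<bar> \<le> \<bar>f x\<bar> + \<bar>p x\<bar>" by (rule abs_triangle_ineq4)
    then show ?thesis using True bnd[of x] e by simp
  qed (use close e in simp)
  then have "(\<integral>x. \<bar>f x - p x\<bar> \<partial>M) \<le> (\<integral>x. e + (B + B') * indicator A x \<partial>M)"
    using int intA by (intro integral_mono) auto
  then have "\<bar>(\<integral>x. f x - p x \<partial>M)\<bar> \<le> (\<integral>x. e + (B + B') * indicator A x \<partial>M)"
    by (rule order_trans[OF integral_abs_bound])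
  also have "\<dots> = e * measure M (space M) + (B + B') * measure M A"
    using intA A by (simp add: sets.Int_space_eq2)
  finally show ?thesis using int by simp
qed

lemma tendsto_measure_norm_greater:
  fixes M :: "'e::real_normed_vector measure"
  assumes "finite_measure M" "sets M = sets borel"
  shows "(\<lambda>n. measure M {x. real n < norm x}) \<longlonglongrightarrow> 0"
proof -
  interpret finite_measure M by fact
  have "(\<lambda>n. measure M {x. real n < norm x}) \<longlonglongrightarrow> measure M (\<Inter>n. {x. real n < norm x})"
  proof (rule finite_Lim_measure_decseq)
    have "{x::'e. real n < norm x} \<in> sets borel" for n
      by (intro borel_open open_Collect_less continuous_intros)
    then show "range (\<lambda>n. {x::'e. real n < norm x}) \<subseteq> sets M" using assms(2) by blast
    show "decseq (\<lambda>n. {x::'e. real n < norm x})"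
      unfolding decseq_def by (auto intro: le_less_trans)
  qed
  moreover have "x \<notin> {y. real (nat \<lceil>norm x\<rceil>) < norm y}" for x :: 'e
    using le_of_int_ceiling[of "norm x"] by (simp add: not_less)
  then have "(\<Inter>n. {x::'e. real n < norm x}) = {}" by blast
  ultimately show ?thesis by simp
qed

lemma abs_integral_diff_le_if_char_vec_eq:
  fixes \<mu> \<nu> :: "'e::euclidean_space measure" and f :: "'e \<Rightarrow> real"
  assumes fin: "finite_measure \<mu>" "finite_measure \<nu>"
    and sets: "sets \<mu> = sets borel" "sets \<nu> = sets borel"
    and char: "char_vec \<mu> = char_vec \<nu>"
    and cont: "continuous_on UNIV f" and bnd: "\<And>x. \<bar>f x\<bar> \<le> B" and e: "0 < e" "e \<le> 1"
  shows "\<bar>(\<integral>x. f x \<partial>\<mu>) - (\<integral>x. f x \<partial>\<nu>)\<bar>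
    \<le> e * (measure \<mu> (space \<mu>) + measure \<nu> (space \<nu>) + 2 * (2 * B + 1))"
proof -
  have B: "0 \<le> B" using bnd[of 0] by linarith
  have "eventually (\<lambda>n. measure \<mu> {x. real n < norm x} < e \<and> measure \<nu> {x. real n < norm x} < e)
      sequentially"
    using order_tendstoD(2)[OF tendsto_measure_norm_greater[OF fin(1) sets(1)] e(1)]
      order_tendstoD(2)[OF tendsto_measure_norm_greater[OF fin(2) sets(2)] e(1)]
    by (rule eventually_conj)
  then obtain n :: nat where n: "measure \<mu> {x. real n < norm x} < e" "measure \<nu> {x. real n < norm x} < e"
    unfolding eventually_sequentially by blast
  obtain p where p: "(\<lambda>x. complex_of_real (p x)) \<in> trig_polys" "continuous_on UNIV p"
    "\<And>x. norm x \<le> real n \<Longrightarrow> \<bar>f x - p x\<bar> < e" "\<And>x. \<bar>p x\<bar> \<le> B + e"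
    using trig_poly_approx_on_ball[OF cont bnd of_nat_0_le_iff e(1)] by blast
  have approx: "\<bar>(\<integral>x. f x \<partial>M) - (\<integral>x. p x \<partial>M)\<bar> \<le> e * measure M (space M) + (2 * B + 1) * e"
    if M: "finite_measure M" "sets M = sets borel" "measure M {x. real n < norm x} < e" for M
  proof -
    have "f \<in> borel_measurable M" "p \<in> borel_measurable M"
      using cont p(2) unfolding measurable_cong_sets[OF M(2) refl]
      by (auto intro: borel_measurable_continuous_onI)
    moreover have "{x. real n < norm x} \<in> sets M"
      unfolding M(2) by (intro borel_open open_Collect_less continuous_intros)
    moreover have "\<bar>f x - p x\<bar> \<le> e" if "x \<notin> {x. real n < norm x}" for x
      using p(3)[of x] that by simp
    ultimately have "\<bar>(\<integral>x. f x \<partial>M) - (\<integral>x. p x \<partial>M)\<bar>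
        \<le> e * measure M (space M) + (B + (B + e)) * measure M {x. real n < norm x}"
      using bnd p(4) e(1) by (intro integral_diff_le_off_set[OF M(1)]) auto
    also have "\<dots> \<le> e * measure M (space M) + (2 * B + 1) * e"
      using M(3) B e by (intro add_left_mono mult_mono) auto
    finally show ?thesis .
  qed
  have "(\<integral>x. p x \<partial>\<mu>) = (\<integral>x. p x \<partial>\<nu>)"
    by (rule integral_real_trig_poly_eq[OF fin sets char p(1)])
  then have "\<bar>(\<integral>x. f x \<partial>\<mu>) - (\<integral>x. f x \<partial>\<nu>)\<bar>
      \<le> e * measure \<mu> (space \<mu>) + e * measure \<nu> (space \<nu>) + 2 * ((2 * B + 1) * e)"
    using approx[OF fin(1) sets(1) n(1)] approx[OF fin(2) sets(2) n(2)] by linarith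
  then show ?thesis by (simp add: algebra_simps)
qed

lemma integral_bounded_continuous_eq_if_char_vec_eq:
  fixes \<mu> \<nu> :: "'e::euclidean_space measure" and f :: "'e \<Rightarrow> real"
  assumes fin: "finite_measure \<mu>" "finite_measure \<nu>"
    and sets: "sets \<mu> = sets borel" "sets \<nu> = sets borel"
    and char: "char_vec \<mu> = char_vec \<nu>"
    and cont: "continuous_on UNIV f" and bnd: "\<And>x. \<bar>f x\<bar> \<le> B"
  shows "(\<integral>x. f x \<partial>\<mu>) = (\<integral>x. f x \<partial>\<nu>)"
proof -
  define C where "C = measure \<mu> (space \<mu>) + measure \<nu> (space \<nu>) + 2 * (2 * B + 1)"
  have C: "0 < C"
    unfolding C_def using bnd[of 0] by (intro add_nonneg_pos add_nonneg_nonneg measure_nonneg) simp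
  have "\<bar>(\<integral>x. f x \<partial>\<mu>) - (\<integral>x. f x \<partial>\<nu>)\<bar> \<le> 0"
  proof (rule field_le_epsilon)
    fix d :: real assume d: "0 < d"
    have "min 1 (d / C) * C \<le> d" using C by (simp add: min_def field_simps)
    then show "\<bar>(\<integral>x. f x \<partial>\<mu>) - (\<integral>x. f x \<partial>\<nu>)\<bar> \<le> 0 + d"
      using abs_integral_diff_le_if_char_vec_eq[OF fin sets char cont bnd, of "min 1 (d / C)"] d C
      unfolding C_def[symmetric] by simp
  qed
  then show ?thesis by simp
qed

lemma tendsto_integral_infdist_cutoff:
  fixes M :: "'e::metric_space measure"
  assumes M: "finite_measure M" "sets M = sets borel" and F: "closed F" "F \<noteq> {}"
  shows "(\<lambda>n. \<integral>x. max 0 (1 - real n * infdist x F) \<partial>M) \<longlonglongrightarrow> measure M F"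
proof -
  interpret finite_measure M by fact
  have Fm: "F \<in> sets M" using M(2) F by simp
  have "(\<lambda>n. \<integral>x. max 0 (1 - real n * infdist x F) \<partial>M) \<longlonglongrightarrow> (\<integral>x. indicator F x \<partial>M)"
  proof (rule integral_dominated_convergence[where w="\<lambda>_. 1"])
    show "(\<lambda>x. max 0 (1 - real n * infdist x F)) \<in> borel_measurable M" for n
      unfolding measurable_cong_sets[OF M(2) refl]
      by (intro borel_measurable_continuous_onI continuous_intros)
    show "AE x in M. norm (max 0 (1 - real n * infdist x F)) \<le> 1" for n
      using infdist_nonneg[of _ F] by (simp add: mult_nonneg_nonneg)
    show "AE x in M. (\<lambda>n. max 0 (1 - real n * infdist x F)) \<longlonglongrightarrow> indicator F x"
    proof (intro AE_I2)
      fix x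
      show "(\<lambda>n. max 0 (1 - real n * infdist x F)) \<longlonglongrightarrow> indicator F x"
      proof (cases "x \<in> F")
        case True
        then show ?thesis using in_closed_iff_infdist_zero[OF F] by simp
      next
        case False
        then have d: "0 < infdist x F"
          using in_closed_iff_infdist_zero[OF F] infdist_nonneg[of x F] by simp
        obtain N :: nat where "1 / infdist x F < real N" using reals_Archimedean2 by blast
        then have "max 0 (1 - real n * infdist x F) = 0" if "N \<le> n" for n
          using that d by (simp add: divide_less_eq) (smt (verit) mult_right_mono of_nat_mono)
        then have "(\<lambda>n. max 0 (1 - real n * infdist x F)) \<longlonglongrightarrow> 0"
          by (intro tendsto_eventually) (auto simp: eventually_sequentially)
        then show ?thesis using False by simp
      qed
    qed
  qed (use Fm in simp_all)
  also have "(\<integral>x. indicator F x \<partial>M) = measure M F"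
    using Fm by (simp add: sets.Int_space_eq2)
  finally show ?thesis .
qed

theorem char_vec_uniqueness:
  fixes \<mu> \<nu> :: "'e::euclidean_space measure"
  assumes fin: "finite_measure \<mu>" "finite_measure \<nu>"
    and sets: "sets \<mu> = sets borel" "sets \<nu> = sets borel"
    and char: "char_vec \<mu> = char_vec \<nu>"
  shows "\<mu> = \<nu>"
proof (rule measure_eqI_generator_eq[where E="Collect closed" and \<Omega>=UNIV and A="\<lambda>_. UNIV"])
  show "emeasure \<mu> F = emeasure \<nu> F" if "F \<in> Collect closed" for F
  proof (cases "F = {}")
    case False
    have F: "closed F" using that by simp
    have "(\<integral>x. max 0 (1 - real n * infdist x F) \<partial>\<mu>) = (\<integral>x. max 0 (1 - real n * infdist x F) \<partial>\<nu>)" for n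
      using infdist_nonneg[of _ F]
      by (intro integral_bounded_continuous_eq_if_char_vec_eq[OF fin sets char, where B=1] continuous_intros)
        (simp add: mult_nonneg_nonneg)
    then have "(\<lambda>n. \<integral>x. max 0 (1 - real n * infdist x F) \<partial>\<mu>) \<longlonglongrightarrow> measure \<nu> F"
      using tendsto_integral_infdist_cutoff[OF fin(2) sets(2) F False] by simp
    then have "measure \<mu> F = measure \<nu> F"
      using LIMSEQ_unique tendsto_integral_infdist_cutoff[OF fin(1) sets(1) F False] by blast
    then show ?thesis
      using finite_measure.emeasure_eq_measure[OF fin(1)] finite_measure.emeasure_eq_measure[OF fin(2)]
      by simp
  qed simp
  show "sets \<mu> = sigma_sets UNIV (Collect closed)" "sets \<nu> = sigma_sets UNIV (Collect closed)"
    using sets by (simp_all add: borel_eq_closed)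
  show "emeasure \<mu> UNIV \<noteq> \<infinity>" using finite_measure.emeasure_finite[OF fin(1)] by simp
qed (auto simp: Int_stable_def)

section \<open>Independence and Gaussian vectors\<close>

lemma char_vec_distr:
  fixes U :: "'a \<Rightarrow> 'e::euclidean_space"
  assumes "U \<in> borel_measurable M"
  shows "char_vec (distr M borel U) t = (\<integral>\<omega>. cis (t \<bullet> U \<omega>) \<partial>M)"
  unfolding char_vec_def
  by (rule integral_distr[OF assms]) (intro borel_measurable_continuous_onI continuous_intros)

lemma sets_pair_measure_borel:
  fixes MU :: "'u::second_countable_topology measure" and MV :: "'v::second_countable_topology measure"
  assumes "sets MU = sets borel" "sets MV = sets borel"
  shows "sets (MU \<Otimes>\<^sub>M MV) = sets borel"
  using sets_pair_measure_cong[OF assms] borel_prod[where 'a='u and 'b='v] by metis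

lemma char_vec_pair_measure:
  fixes MU :: "'u::euclidean_space measure" and MV :: "'v::euclidean_space measure"
  assumes "prob_space MU" "prob_space MV" and sets: "sets MU = sets borel" "sets MV = sets borel"
  shows "char_vec (MU \<Otimes>\<^sub>M MV) (a, b) = char_vec MU a * char_vec MV b"
proof -
  interpret U: prob_space MU by fact
  interpret V: prob_space MV by fact
  interpret pair_prob_space MU MV ..
  have eq: "(\<lambda>(x, y). cis (a \<bullet> x) * cis (b \<bullet> y)) = (\<lambda>z. cis ((a, b) \<bullet> z))"
    by (auto simp: cis_mult)
  have "(\<lambda>z. cis ((a, b) \<bullet> z)) \<in> borel_measurable (MU \<Otimes>\<^sub>M MV)"
    unfolding measurable_cong_sets[OF sets_pair_measure_borel[OF sets] refl]
    by (intro borel_measurable_continuous_onI continuous_intros)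
  then have "integrable (MU \<Otimes>\<^sub>M MV) (\<lambda>(x, y). cis (a \<bullet> x) * cis (b \<bullet> y))"
    unfolding eq by (intro P.integrable_const_bound[where B=1]) auto
  from integral_fst'[OF this] show ?thesis
    unfolding char_vec_def eq[symmetric] by (simp del: cis_mult)
qed

lemma indep_rv_if_distr_pair_eq:
  fixes U :: "'a \<Rightarrow> 'u::second_countable_topology" and V :: "'a \<Rightarrow> 'v::second_countable_topology"
  assumes "prob_space M" and Um: "U \<in> borel_measurable M" and Vm: "V \<in> borel_measurable M"
    and eq: "distr M borel (\<lambda>\<omega>. (U \<omega>, V \<omega>)) = distr M borel U \<Otimes>\<^sub>M distr M borel V"
  shows "indep_rv M U V"
  unfolding indep_rv_def
proof (intro conjI Um Vm ballI)
  interpret prob_space M by fact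
  interpret U: prob_space "distr M borel U" using Um by (rule prob_space_distr)
  interpret V: prob_space "distr M borel V" using Vm by (rule prob_space_distr)
  interpret pair_prob_space "distr M borel U" "distr M borel V" ..
  fix A B assume A: "A \<in> sets (borel :: 'u measure)" and B: "B \<in> sets (borel :: 'v measure)"
  have UVm: "(\<lambda>\<omega>. (U \<omega>, V \<omega>)) \<in> borel_measurable M"
    using measurable_Pair[OF Um Vm] by (simp add: borel_prod)
  have AB: "A \<times> B \<in> sets (borel :: ('u \<times> 'v) measure)"
    using pair_measureI[OF A B] borel_prod[where 'a='u and 'b='v] by metis
  have "measure M (U -` A \<inter> V -` B \<inter> space M) = measure M ((\<lambda>\<omega>. (U \<omega>, V \<omega>)) -` (A \<times> B) \<inter> space M)"
    by (rule arg_cong[where f="measure M"]) auto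
  also have "\<dots> = measure (distr M borel U \<Otimes>\<^sub>M distr M borel V) (A \<times> B)"
    unfolding eq[symmetric] by (rule measure_distr[symmetric, OF UVm AB])
  also have "\<dots> = measure (distr M borel U) A * measure (distr M borel V) B"
    using V.emeasure_pair_measure_Times[of A "distr M borel U" B] A B
    by (simp add: measure_def enn2real_mult)
  also have "\<dots> = measure M (U -` A \<inter> space M) * measure M (V -` B \<inter> space M)"
    using measure_distr[OF Um A] measure_distr[OF Vm B] by simp
  finally show "measure M (U -` A \<inter> V -` B \<inter> space M)
      = measure M (U -` A \<inter> space M) * measure M (V -` B \<inter> space M)" .
qed

theorem indep_rv_if_char_factorizes:
  fixes U :: "'a \<Rightarrow> 'u::euclidean_space" and V :: "'a \<Rightarrow> 'v::euclidean_space"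
  assumes M: "prob_space M" and Um: "U \<in> borel_measurable M" and Vm: "V \<in> borel_measurable M"
    and char: "\<And>a b. (\<integral>\<omega>. cis (a \<bullet> U \<omega> + b \<bullet> V \<omega>) \<partial>M)
                    = (\<integral>\<omega>. cis (a \<bullet> U \<omega>) \<partial>M) * (\<integral>\<omega>. cis (b \<bullet> V \<omega>) \<partial>M)"
  shows "indep_rv M U V"
proof (rule indep_rv_if_distr_pair_eq[OF M Um Vm])
  interpret prob_space M by fact
  have UVm: "(\<lambda>\<omega>. (U \<omega>, V \<omega>)) \<in> borel_measurable M"
    using measurable_Pair[OF Um Vm] by (simp add: borel_prod)
  have PU: "prob_space (distr M borel U)" and PV: "prob_space (distr M borel V)"
    using Um Vm by (simp_all add: prob_space_distr)
  show "distr M borel (\<lambda>\<omega>. (U \<omega>, V \<omega>)) = distr M borel U \<Otimes>\<^sub>M distr M borel V"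
  proof (rule char_vec_uniqueness)
    show "finite_measure (distr M borel (\<lambda>\<omega>. (U \<omega>, V \<omega>)))"
      using prob_space_distr[OF UVm] by (simp add: prob_space_def)
    interpret U: prob_space "distr M borel U" by (fact PU)
    interpret V: prob_space "distr M borel V" by (fact PV)
    interpret pair_prob_space "distr M borel U" "distr M borel V" ..
    show "finite_measure (distr M borel U \<Otimes>\<^sub>M distr M borel V)"
      by (rule P.finite_measure_axioms)
    show "sets (distr M borel U \<Otimes>\<^sub>M distr M borel V) = sets borel"
      by (intro sets_pair_measure_borel) simp_all
    show "char_vec (distr M borel (\<lambda>\<omega>. (U \<omega>, V \<omega>))) = char_vec (distr M borel U \<Otimes>\<^sub>M distr M borel V)"
    proof
      fix t :: "'u \<times> 'v"
      obtain a b where t: "t = (a, b)" by (cases t)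
      show "char_vec (distr M borel (\<lambda>\<omega>. (U \<omega>, V \<omega>))) t = char_vec (distr M borel U \<Otimes>\<^sub>M distr M borel V) t"
        unfolding t char_vec_pair_measure[OF PU PV sets_distr sets_distr]
        by (simp add: char_vec_distr UVm Um Vm char)
    qed
  qed simp
qed

lemma integral_cis_normal:
  assumes M: "prob_space M" and X: "distributed M lborel X (normal_density \<mu> \<sigma>)" and \<sigma>: "0 < \<sigma>"
  shows "(\<integral>\<omega>. cis (X \<omega>) \<partial>M) = cis \<mu> * exp (- \<sigma>\<^sup>2 / 2)"
proof -
  interpret prob_space M by fact
  define Z where "Z \<omega> = (X \<omega> - \<mu>) / \<sigma>" for \<omega>
  have "distributed M lborel Z std_normal_density"
    using normal_standard_normal_convert[OF \<sigma>, of X \<mu>] X unfolding Z_def by simp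
  then have Zm: "Z \<in> measurable M lborel" and dZ: "distr M lborel Z = std_normal_distribution"
    by (simp_all add: distributed_def)
  have XZ: "X \<omega> = \<mu> + \<sigma> * Z \<omega>" for \<omega> unfolding Z_def using \<sigma> by simp
  have "(\<integral>\<omega>. cis (X \<omega>) \<partial>M) = (\<integral>\<omega>. cis \<mu> * iexp (\<sigma> * Z \<omega>) \<partial>M)"
    unfolding XZ by (simp add: cis_conv_exp exp_add[symmetric] algebra_simps)
  also have "\<dots> = cis \<mu> * (\<integral>z. iexp (\<sigma> * z) \<partial>(distr M lborel Z))"
    using Zm by (simp add: integral_distr)
  also have "\<dots> = cis \<mu> * char std_normal_distribution \<sigma>"
    unfolding dZ char_def ..
  finally show ?thesis by (simp add: char_std_normal_distribution)
qed

lemma integral_cis_gaussian_vec: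
  assumes M: "prob_space M" and Z: "gaussian_vec M Z m C"
  shows "(\<integral>\<omega>. cis (a \<bullet> Z \<omega>) \<partial>M) = cis (a \<bullet> m) * exp (- (a \<bullet> (C *v a)) / 2)"
proof -
  interpret prob_space M by fact
  have Zm: "Z \<in> borel_measurable M" and nn: "0 \<le> a \<bullet> (C *v a)"
    and law: "if a \<bullet> (C *v a) = 0 then (AE \<omega> in M. a \<bullet> Z \<omega> = a \<bullet> m)
          else distributed M lborel (\<lambda>\<omega>. a \<bullet> Z \<omega>) (normal_density (a \<bullet> m) (sqrt (a \<bullet> (C *v a))))"
    using Z unfolding gaussian_vec_def by auto
  show ?thesis
  proof (cases "a \<bullet> (C *v a) = 0")
    case True
    have "(\<lambda>\<omega>. cis (a \<bullet> Z \<omega>)) \<in> borel_measurable M"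
      by (rule measurable_compose[OF Zm borel_measurable_continuous_onI]) (intro continuous_intros)
    then have "(\<integral>\<omega>. cis (a \<bullet> Z \<omega>) \<partial>M) = (\<integral>\<omega>. cis (a \<bullet> m) \<partial>M)"
      using law True by (intro integral_cong_AE) auto
    then show ?thesis using True by (simp add: prob_space)
  next
    case False
    then show ?thesis using integral_cis_normal[OF M] law nn by simp
  qed
qed

lemma integral_cis_add_const: "(\<integral>\<omega>. cis (f \<omega> + c) \<partial>M) = cis c * (\<integral>\<omega>. cis (f \<omega>) \<partial>M)"
  by (simp add: cis_mult[symmetric] add.commute)

theorem gaussian_vec_indep_if_uncorrelated:
  fixes Z :: "'a \<Rightarrow> real^'m::finite" and P :: "real^'m^'p::finite" and Q :: "real^'m^'q::finite"
  assumes M: "prob_space M" and Z: "gaussian_vec M Z m C" and uncorr: "Q ** C ** transpose P = 0"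
  shows "indep_rv M (\<lambda>\<omega>. P *v Z \<omega>) (\<lambda>\<omega>. Q *v Z \<omega> + d)"
proof (rule indep_rv_if_char_factorizes[OF M])
  have Zm: "Z \<in> borel_measurable M" and symC: "transpose C = C"
    using Z unfolding gaussian_vec_def by auto
  show "(\<lambda>\<omega>. P *v Z \<omega>) \<in> borel_measurable M" "(\<lambda>\<omega>. Q *v Z \<omega> + d) \<in> borel_measurable M"
    by (rule measurable_compose[OF Zm borel_measurable_continuous_onI], intro continuous_intros)+
  fix a b
  define x where "x = transpose P *v a"
  define y where "y = transpose Q *v b"
  have U: "a \<bullet> (P *v Z \<omega>) = x \<bullet> Z \<omega>" and V: "b \<bullet> (Q *v Z \<omega> + d) = y \<bullet> Z \<omega> + b \<bullet> d" for \<omega>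
    unfolding x_def y_def by (simp_all add: inner_add_right dot_lmul_matrix[symmetric])
  have "y \<bullet> (C *v x) = b \<bullet> ((Q ** C ** transpose P) *v a)"
    unfolding x_def y_def inner_matrix_vector_mult[symmetric] transpose_transpose
    by (simp only: matrix_vector_mul_assoc matrix_mul_assoc)
  then have "y \<bullet> (C *v x) = 0" unfolding uncorr by simp
  then have quad: "(x + y) \<bullet> (C *v (x + y)) = x \<bullet> (C *v x) + y \<bullet> (C *v y)"
    by (rule quadratic_form_add_orthogonal[OF symC])
  have exp_half_add: "exp (- (p + q) / 2) = exp (- p / 2) * exp (- q / 2)" for p q :: real
    by (simp add: exp_add[symmetric] field_simps)
  have "(\<integral>\<omega>. cis (a \<bullet> (P *v Z \<omega>) + b \<bullet> (Q *v Z \<omega> + d)) \<partial>M)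
      = (\<integral>\<omega>. cis ((x + y) \<bullet> Z \<omega> + b \<bullet> d) \<partial>M)"
    unfolding U V by (simp add: inner_add_left add.assoc)
  also have "\<dots> = cis (b \<bullet> d) * (cis ((x + y) \<bullet> m) * exp (- ((x + y) \<bullet> (C *v (x + y))) / 2))"
    unfolding integral_cis_add_const integral_cis_gaussian_vec[OF M Z] ..
  also have "\<dots> = (cis (x \<bullet> m) * exp (- (x \<bullet> (C *v x)) / 2)) *
      (cis (b \<bullet> d) * (cis (y \<bullet> m) * exp (- (y \<bullet> (C *v y)) / 2)))"
    unfolding quad exp_half_add by (simp add: inner_add_left cis_mult[symmetric] mult_ac)
  also have "\<dots> = (\<integral>\<omega>. cis (a \<bullet> (P *v Z \<omega>)) \<partial>M) * (\<integral>\<omega>. cis (b \<bullet> (Q *v Z \<omega> + d)) \<partial>M)"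
    unfolding U V integral_cis_add_const integral_cis_gaussian_vec[OF M Z] ..
  finally show "(\<integral>\<omega>. cis (a \<bullet> (P *v Z \<omega>) + b \<bullet> (Q *v Z \<omega> + d)) \<partial>M) =
      (\<integral>\<omega>. cis (a \<bullet> (P *v Z \<omega>)) \<partial>M) * (\<integral>\<omega>. cis (b \<bullet> (Q *v Z \<omega> + d)) \<partial>M)" .
qed

section \<open>The restricted estimator\<close>

lemma sum_matrix_vector_mult:
  "finite S \<Longrightarrow> (sum f S) *v (x::real^'n) = (\<Sum>t\<in>S. (f t :: real^'n^'m) *v x)"
  by (induction S rule: finite_induct) (simp_all add: matrix_vector_mult_add_rdistrib)

lemma outer_vec_mult: "outer_vec v *v y = (v \<bullet> y) *\<^sub>R v"
  by (simp add: outer_vec_def matrix_vector_mult_def inner_vec_def vec_eq_iff sum_distrib_left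
      sum_distrib_right mult.commute mult.left_commute)

lemma bigX_mult_apply: "(bigX Xd *v x) $ (i, t) = Xd i t \<bullet> (\<chi> k. x $ (i, k))"
proof -
  have "(bigX Xd *v x) $ (i, t) = (\<Sum>q\<in>UNIV. (if fst q = i then Xd i t $ snd q else 0) * x $ q)"
    unfolding matrix_vector_mult_def by (auto intro!: sum.cong simp: bigX_def)
  also have "\<dots> = (\<Sum>(j, k)\<in>UNIV. if j = i then Xd i t $ k * x $ (i, k) else 0)"
    by (intro sum.cong) auto
  also have "\<dots> = (\<Sum>j\<in>UNIV. \<Sum>k\<in>UNIV. if j = i then Xd i t $ k * x $ (i, k) else 0)"
    by (simp only: sum.cartesian_product UNIV_Times_UNIV)
  also have "\<dots> = (\<Sum>k\<in>UNIV. Xd i t $ k * x $ (i, k))"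
    by (subst sum.swap) (simp add: sum.delta)
  finally show ?thesis by (simp add: inner_vec_def)
qed

lemma inj_bigX:
  assumes Sig: "\<And>i. (\<Sum>t\<in>UNIV. outer_vec (Xd i t)) = Sig" and inv: "invertible Sig"
  shows "inj ((*v) (bigX Xd))"
proof -
  have "(\<chi> k. x $ (i, k)) = 0" if x: "bigX Xd *v x = 0" for x i
  proof -
    define xi where "xi = (\<chi> k. x $ (i, k))"
    have "Xd i t \<bullet> xi = 0" for t
      using arg_cong[OF x, of "\<lambda>v. v $ (i, t)"] unfolding xi_def by (simp add: bigX_mult_apply)
    then have "Sig *v xi = Sig *v 0"
      unfolding Sig[of i, symmetric] by (simp add: sum_matrix_vector_mult outer_vec_mult)
    then show ?thesis unfolding xi_def[symmetric] by (rule injD[OF inj_matrix_vector_mult[OF inv]])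
  qed
  then have "bigX Xd *v x = 0 \<Longrightarrow> x = 0" for x
    by (fastforce simp: vec_eq_iff)
  then show ?thesis
    using matrix_left_invertible_ker matrix_left_invertible_injective by blast
qed

lemma dummyDD_mult_apply: "(dummyDD \<gamma> *v y) $ (i, k) = y $ (\<gamma> i, k)"
proof -
  have "(dummyDD \<gamma> *v y) $ (i, k) = (\<Sum>q\<in>UNIV. if q = (\<gamma> i, k) then y $ q else 0)"
    unfolding matrix_vector_mult_def by (auto intro!: sum.cong simp: dummyDD_def dummyD_def prod_eq_iff)
  then show ?thesis by simp
qed

lemma inj_dummyDD:
  assumes "surj \<gamma>"
  shows "inj ((*v) (dummyDD \<gamma> :: real^('g::finite \<times> 'k::finite)^('n::finite \<times> 'k)))"
proof -
  have "y = 0" if y: "dummyDD \<gamma> *v y = (0 :: real^('n \<times> 'k))" for y :: "real^('g \<times> 'k)"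
  proof (subst vec_eq_iff, intro allI)
    fix q :: "'g \<times> 'k"
    obtain g k where q: "q = (g, k)" by (cases q)
    obtain i where "g = \<gamma> i" using assms by (metis surjD)
    then show "y $ q = 0 $ q"
      using arg_cong[OF y, of "\<lambda>v. v $ (i, k)"] unfolding q by (simp add: dummyDD_mult_apply)
  qed
  then show ?thesis
    using matrix_left_invertible_ker matrix_left_invertible_injective by blast
qed

lemma inj_Xgam:
  assumes "\<And>i. (\<Sum>t\<in>UNIV. outer_vec (Xd i t)) = Sig" "invertible Sig" "surj \<gamma>"
  shows "inj ((*v) (Xgam Xd \<gamma>))"
proof -
  have "(*v) (Xgam Xd \<gamma>) = (*v) (bigX Xd) \<circ> (*v) (dummyDD \<gamma>)"
    by (rule ext) (simp add: Xgam_def matrix_vector_mul_assoc)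
  then show ?thesis
    using inj_compose[OF inj_bigX[OF assms(1,2)] inj_dummyDD[OF assms(3)]] by simp
qed

lemma restricted_least_squares_cross_cov_zero:
  fixes X :: "real^'p^'m" and D :: "real^'q^'p" and R :: "real^'q^'r"
  defines "Q \<equiv> matrix_inv (transpose (X ** D) ** (X ** D))"
  defines "P \<equiv> R ** Q ** transpose D"
    and "L \<equiv> transpose X ** (X ** D) ** Q ** transpose R ** matrix_inv (R ** Q ** transpose R)"
  assumes invH: "invertible (transpose (X ** D) ** (X ** D))" and invG: "invertible (R ** Q ** transpose R)"
  shows "(mat 1 - L ** P) ** (transpose X ** X) ** transpose P = 0"
proof -
  note mv = matrix_vector_mul_assoc[symmetric]
  define A where "A = transpose X ** X"
  define G where "G = R ** Q ** transpose R"
  have "transpose (transpose (X ** D) ** (X ** D)) = transpose (X ** D) ** (X ** D)"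
    by (simp add: matrix_transpose_mul)
  then have symQ: "transpose Q = Q"
    unfolding Q_def by (rule transpose_matrix_inv_symmetric[OF _ invH])
  have HQ: "transpose D *v (A *v (D *v (Q *v u))) = u" for u
  proof -
    have "(transpose (X ** D) ** (X ** D) ** Q) *v u = u"
      unfolding Q_def matrix_mul_matrix_inv(1)[OF invH] by (rule matrix_vector_mul_lid)
    then show ?thesis
      unfolding A_def by (simp only: mv matrix_transpose_mul)
  qed
  have Pt: "transpose P *v a = D *v (Q *v (transpose R *v a))" for a
    unfolding P_def by (simp only: matrix_transpose_mul symQ transpose_transpose mv)
  have PAPt: "P *v (A *v (transpose P *v a)) = G *v a" for a
    unfolding Pt unfolding P_def G_def mv HQ ..
  have GiG: "matrix_inv G *v (G *v a) = a" for a
  proof -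
    have "(matrix_inv G ** G) *v a = a"
      unfolding G_def matrix_mul_matrix_inv(2)[OF invG] by (rule matrix_vector_mul_lid)
    then show ?thesis by (simp only: mv)
  qed
  have LG: "L *v (G *v a) = A *v (transpose P *v a)" for a
    unfolding Pt L_def A_def G_def[symmetric] by (simp only: mv GiG)
  show ?thesis
  proof (rule iffD2[OF matrix_eq], intro allI)
    fix a
    show "((mat 1 - L ** P) ** (transpose X ** X) ** transpose P) *v a = 0 *v a"
      unfolding A_def[symmetric]
      by (simp only: mv matrix_vector_mult_diff_rdistrib matrix_vector_mul_lid PAPt LG) simp
  qed
qed

lemma R_alpha_hat_eq:
  "R *v alpha_hat Xd \<gamma> s
     = (R ** matrix_inv (transpose (Xgam Xd \<gamma>) ** Xgam Xd \<gamma>) ** transpose (dummyDD \<gamma>)) *v s"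
  unfolding alpha_hat_def by (simp only: matrix_vector_mul_assoc[symmetric])

lemma W_PCR_affine:
  fixes Xd :: "'n::finite \<Rightarrow> 't::finite \<Rightarrow> real^'k::finite" and \<gamma> :: "'n \<Rightarrow> 'g::finite"
    and R :: "real^('g \<times> 'k)^'r::finite"
  defines "X \<equiv> bigX Xd" and "Q \<equiv> matrix_inv (transpose (Xgam Xd \<gamma>) ** Xgam Xd \<gamma>)"
  defines "P \<equiv> R ** Q ** transpose (dummyDD \<gamma>)"
    and "L \<equiv> transpose X ** Xgam Xd \<gamma> ** Q ** transpose R ** matrix_inv (R ** Q ** transpose R)"
  shows "W_PCR Xd \<gamma> R rv Y = (mat 1 - L ** P) *v (transpose X *v Y) + L *v rv"
proof -
  note mv = matrix_vector_mul_assoc[symmetric]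
  define s where "s = transpose X *v Y"
  define ah where "ah = alpha_hat Xd \<gamma> s"
  define K where "K = Q ** transpose R ** matrix_inv (R ** Q ** transpose R)"
  have Rah: "R *v ah = P *v s"
    unfolding ah_def P_def Q_def by (rule R_alpha_hat_eq)
  have Lv: "L *v v = (transpose X ** Xgam Xd \<gamma>) *v (K *v v)" for v
    unfolding L_def K_def by (simp only: mv)
  have "W_PCR Xd \<gamma> R rv Y
      = (transpose X ** Xgam Xd \<gamma>) *v (ah - K *v (R *v ah - rv)) + transpose X *v (Y - Xgam Xd \<gamma> *v ah)"
    unfolding W_PCR_def alpha_hat_R_def U_hat_def Let_def ah_def s_def K_def Q_def X_def ..
  also have "\<dots> = s - L *v (P *v s) + L *v rv"
    unfolding Rah s_def[symmetric]
    by (simp only: matrix_vector_right_distrib matrix_vector_mult_diff_distrib Lv mv s_def[symmetric])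
      (simp add: algebra_simps)
  also have "\<dots> = (mat 1 - L ** P) *v s + L *v rv"
    by (simp add: matrix_vector_mult_diff_rdistrib mv)
  finally show ?thesis unfolding s_def .
qed

theorem lemmaC1:
  fixes M :: "'a measure"
    and Xd :: "'n::finite \<Rightarrow> 't::finite \<Rightarrow> real^'k::finite"
    and Sig :: "real^'k^'k"
    and Y :: "'a \<Rightarrow> real^('n \<times> 't)"
    and B :: "real^('n \<times> 'k)"
    and \<sigma>2 :: real
    and \<gamma> :: "'n \<Rightarrow> 'g::finite"
    and R :: "real^('g \<times> 'k)^'r::finite"
    and rv :: "real^'r"
  assumes "prob_space M"
    and "\<sigma>2 > 0"
    and "\<And>i. (\<Sum>t\<in>UNIV. outer_vec (Xd i t)) = Sig"
    and "invertible Sig"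
    and "Y \<in> borel_measurable M"
    and "gaussian_vec M (\<lambda>\<omega>. transpose (bigX Xd) *v Y \<omega>)
           ((transpose (bigX Xd) ** bigX Xd) *v B) (\<sigma>2 *\<^sub>R (transpose (bigX Xd) ** bigX Xd))"
    and "surj \<gamma>"
    and "rank R = CARD('r)"
  shows "indep_rv M
           (\<lambda>\<omega>. R *v alpha_hat Xd \<gamma> (transpose (bigX Xd) *v Y \<omega>))
           (\<lambda>\<omega>. W_PCR Xd \<gamma> R rv (Y \<omega>))"
proof -
  define X where "X = bigX Xd"
  define D where "D = (dummyDD \<gamma> :: real^('g \<times> 'k)^('n \<times> 'k))"
  define Q where "Q = matrix_inv (transpose (X ** D) ** (X ** D))"
  define P where "P = R ** Q ** transpose D"
  define L where "L = transpose X ** (X ** D) ** Q ** transpose R ** matrix_inv (R ** Q ** transpose R)"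
  have H: "pos_def (transpose (X ** D) ** (X ** D))"
    using inj_Xgam[OF assms(3,4,7)] unfolding Xgam_def X_def D_def by (rule pos_def_gram)
  have "inj ((*v) (transpose R))"
    using assms(8) full_rank_injective[of "transpose R"] rank_transpose[of R] by simp
  then have G: "pos_def (R ** Q ** transpose R)"
    unfolding Q_def by (intro pos_def_congruence pos_def_matrix_inv H)
  have "(mat 1 - L ** P) ** (\<sigma>2 *\<^sub>R (transpose X ** X)) ** transpose P = 0"
    using restricted_least_squares_cross_cov_zero[OF pos_def_invertible[OF H] pos_def_invertible[OF G[unfolded Q_def]]]
    unfolding Q_def P_def L_def by (simp add: matrix_scalar_ac scalar_matrix_assoc[symmetric])
  then have "indep_rv M (\<lambda>\<omega>. P *v (transpose X *v Y \<omega>))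
      (\<lambda>\<omega>. (mat 1 - L ** P) *v (transpose X *v Y \<omega>) + L *v rv)"
    by (rule gaussian_vec_indep_if_uncorrelated[OF assms(1) assms(6)[folded X_def]])
  then show ?thesis
    unfolding R_alpha_hat_eq W_PCR_affine Xgam_def P_def L_def Q_def X_def D_def .
qed

end
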